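(* Let $\mathbb F$ be a field and $A=[a_{ij}],C=[c_{ij}]\in M_n(\mathbb F)$. Then $C=DAD^{-1}$ for some invertible diagonal matrix $D$ if and only if both of the following hold: (1) $a_{ij}\neq0$ if and only if $c_{ij}\neq0$, for all $i,j\in[n]$; (2) for every sequence $(i_1,\dots,i_p)$ ($p\ge1$) of distinct elements of $[n]$ such that, setting $i_{p+1}:=i_1$, at least one of $a_{i_ki_{k+1}}$ and $a_{i_{k+1}i_k}$ is nonzero for each $k\in[p]$, we have $$f_{i_1i_2}(A)\cdots f_{i_{p-1}i_p}(A)f_{i_pi_1}(A)=f_{i_1i_2}(C)\cdots f_{i_{p-1}i_p}(C)f_{i_pi_1}(C).$$
   Context: $[n]=\{1,\dots,n\}$. For $X=[x_{ij}]\in M_n(\mathbb F)$ and $i,j\in[n]$ define $f_{ij}(X)=x_{ij}$ if $x_{ij}\neq0$; $f_{ij}(X)=1/x_{ji}$ if $x_{ij}=0$ and $x_{ji}\ne0$; and $f_{ij}(X)=0$ if $x_{ij}=x_{ji}=0$. *)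

theory Defs
  imports "HOL-Analysis.Analysis"
begin

definition fentry :: "'a::field ^'n^'n \<Rightarrow> 'n \<Rightarrow> 'n \<Rightarrow> 'a" where
  "fentry X i j = (if X $ i $ j \<noteq> 0 then X $ i $ j
                   else if X $ j $ i \<noteq> 0 then inverse (X $ j $ i) else 0)"

definition diagonal_mat :: "'a::zero ^'n^'n \<Rightarrow> bool" where
  "diagonal_mat D \<longleftrightarrow> (\<forall>i j. i \<noteq> j \<longrightarrow> D $ i $ j = 0)"

end

theory Submission
  imports Defs
begin

(* Think of A as a graph with gains: i and j are adjacent when a_ij or a_ji is nonzero.
   Conjugating by D = diag(d) multiplies a_ij by d_i/d_j, and f_ij transforms in the same way
   (also when only a_ji is nonzero, thanks to the reciprocal), so the f-products around cycles
   are invariant.  Conversely, the ratios f_ij(C)/f_ij(A) on the edges have product 1 around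
   every simple cycle, hence around every closed walk (split it at a repeated vertex).  So the
   product of the ratios along a walk from a fixed root of its component to i depends only on i;
   calling it q_i, the ratio on the edge ij is q_j/q_i, and D = diag(1/q) does the job. *)

fun walk_prod :: "('v \<Rightarrow> 'v \<Rightarrow> 'a::comm_monoid_mult) \<Rightarrow> 'v list \<Rightarrow> 'a" where
  "walk_prod w (x # y # vs) = w x y * walk_prod w (y # vs)"
| "walk_prod w _ = 1"

lemma walk_prod_append:
  "walk_prod w (xs @ y # ys) = walk_prod w (xs @ [y]) * walk_prod w (y # ys)"
  by (induction xs rule: induct_list012) (simp_all add: mult.assoc)

lemma walk_prod_snoc:
  "vs \<noteq> [] \<Longrightarrow> walk_prod w (vs @ [y]) = walk_prod w vs * w (last vs) y"
  by (induction vs rule: induct_list012) (simp_all add: mult.assoc)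

lemma successively_append_Cons_iff:
  "successively P (xs @ y # ys) \<longleftrightarrow> successively P (xs @ [y]) \<and> successively P (y # ys)"
  by (induction xs rule: induct_list012) auto

lemma walk_prod_conv_nth:
  "walk_prod w vs = (\<Prod>k<length vs - 1. w (vs ! k) (vs ! Suc k))"
  by (induction vs rule: induct_list012) (simp_all del: prod.lessThan_Suc add: prod.lessThan_Suc_shift)

lemma nth_Suc_append_hd:
  "xs \<noteq> [] \<Longrightarrow> k < length xs \<Longrightarrow> (xs @ [hd xs]) ! Suc k = xs ! ((k + 1) mod length xs)"
  by (cases "Suc k = length xs") (auto simp: nth_append hd_conv_nth)

lemma cyclic_prod_eq_walk_prod:
  "xs \<noteq> [] \<Longrightarrow>
    (\<Prod>k<length xs. w (xs ! k) (xs ! ((k + 1) mod length xs))) = walk_prod w (xs @ [hd xs])"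
  by (simp add: walk_prod_conv_nth nth_append_left nth_Suc_append_hd)

lemma cyclic_edges_iff_successively:
  "xs \<noteq> [] \<Longrightarrow>
    (\<forall>k<length xs. E (xs ! k) (xs ! ((k + 1) mod length xs))) \<longleftrightarrow> successively E (xs @ [hd xs])"
  by (auto simp: successively_conv_nth nth_append_left nth_Suc_append_hd)

lemma walk_prod_nonzero:
  fixes w :: "'v \<Rightarrow> 'v \<Rightarrow> 'a::field"
  shows "successively E vs \<Longrightarrow> (\<And>x y. E x y \<Longrightarrow> w x y \<noteq> 0) \<Longrightarrow> walk_prod w vs \<noteq> 0"
  by (induction vs rule: induct_list012) auto

lemma walk_prod_divide:
  fixes u v :: "'v \<Rightarrow> 'v \<Rightarrow> 'a::field"
  shows "walk_prod (\<lambda>x y. u x y / v x y) vs = walk_prod u vs / walk_prod v vs"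
  by (induction vs rule: induct_list012) simp_all

lemma walk_prod_rescale:
  fixes w :: "'v \<Rightarrow> 'v \<Rightarrow> 'a::field"
  assumes "\<And>x. d x \<noteq> 0" and "vs \<noteq> []"
  shows "walk_prod (\<lambda>x y. d x * w x y / d y) vs = d (hd vs) * walk_prod w vs / d (last vs)"
  using assms(2) by (induction vs rule: induct_list012) (simp_all add: assms(1) field_simps)

lemma rtranclp_imp_walk:
  assumes "E\<^sup>*\<^sup>* x y"
  obtains vs where "successively E vs" "vs \<noteq> []" "hd vs = x" "last vs = y"
  using assms
proof (induction arbitrary: thesis rule: rtranclp_induct)
  case base
  show ?case by (rule base[of "[x]"]) simp_all
next
  case (step y z)
  obtain vs where "successively E vs" "vs \<noteq> []" "hd vs = x" "last vs = y"
    using step.IH .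
  then show ?case
    using step.hyps(2) by (intro step.prems[of "vs @ [z]"]) (auto simp: successively_append_iff)
qed

locale balanced_gain_graph =
  fixes E :: "'v \<Rightarrow> 'v \<Rightarrow> bool" and w :: "'v \<Rightarrow> 'v \<Rightarrow> 'a::field"
  assumes edge_sym: "symp E"
    and simple_cycle_gain:
      "\<And>xs. xs \<noteq> [] \<Longrightarrow> distinct xs \<Longrightarrow> successively E (xs @ [hd xs]) \<Longrightarrow>
         walk_prod w (xs @ [hd xs]) = 1"
begin

lemma closed_walk_gain:
  assumes "successively E vs" "vs \<noteq> []" "hd vs = last vs"
  shows "walk_prod w vs = 1"
  using assms
proof (induction "length vs" arbitrary: vs rule: less_induct)
  case less
  obtain xs x where vs: "vs = xs @ [x]"
    using \<open>vs \<noteq> []\<close> by (metis rev_exhaust)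
  show ?case
  proof (cases "xs = []")
    case True
    then show ?thesis by (simp add: vs)
  next
    case False
    then have "hd xs = x"
      using less.prems(3) by (simp add: vs)
    show ?thesis
    proof (cases "distinct xs")
      case True
      then show ?thesis
        using simple_cycle_gain[of xs] \<open>xs \<noteq> []\<close> \<open>hd xs = x\<close> less.prems(1) by (simp add: vs)
    next
      case False
      then obtain as y bs cs where "xs = as @ [y] @ bs @ [y] @ cs"
        using not_distinct_decomp by blast
      then have split: "vs = as @ y # bs @ y # cs @ [x]"
        by (simp add: vs)
      define inner outer where "inner = y # bs @ [y]" and "outer = as @ y # cs @ [x]"
      have successively_split: "successively E vs \<longleftrightarrow>
          successively E (as @ [y]) \<and> successively E inner \<and> successively E (y # cs @ [x])"
        and walk_prod_split: "walk_prod w vs =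
          walk_prod w (as @ [y]) * (walk_prod w inner * walk_prod w (y # cs @ [x]))"
        using successively_append_Cons_iff[of E as y "bs @ y # cs @ [x]"]
          successively_append_Cons_iff[of E "y # bs" y "cs @ [x]"]
          walk_prod_append[of w as y "bs @ y # cs @ [x]"]
          walk_prod_append[of w "y # bs" y "cs @ [x]"]
        by (simp_all add: split inner_def)
      have walks: "successively E inner" "successively E outer"
        using less.prems(1) successively_append_Cons_iff[of E as y "cs @ [x]"]
        by (simp_all add: successively_split outer_def)
      have closed: "hd inner = last inner" "hd outer = last outer"
        using \<open>hd xs = x\<close> by (auto simp: inner_def outer_def \<open>xs = _\<close> hd_append)
      have shorter: "length inner < length vs" "length outer < length vs"
        by (simp_all add: split inner_def outer_def)
      have "walk_prod w vs = walk_prod w inner * walk_prod w outer"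
        using walk_prod_append[of w as y "cs @ [x]"] by (simp add: walk_prod_split outer_def)
      also have "\<dots> = 1"
        using less.hyps[OF shorter(1)] less.hyps[OF shorter(2)] walks closed
        by (simp add: inner_def outer_def)
      finally show ?thesis .
    qed
  qed
qed

lemma successively_rev_walk: "successively E vs \<Longrightarrow> successively E (rev vs)"
  using edge_sym by (simp add: successively_mono sympD)

lemma walk_prod_mult_rev:
  assumes "successively E vs" "vs \<noteq> []"
  shows "walk_prod w vs * walk_prod w (rev vs) = 1"
proof -
  obtain us x where vs: "vs = us @ [x]"
    using assms(2) by (metis rev_exhaust)
  have "successively E (us @ x # rev us)"
    using assms(1) successively_rev_walk[OF assms(1)] successively_append_Cons_iff[of E us x "rev us"]
    by (simp add: vs)
  moreover have "hd (us @ x # rev us) = last (us @ x # rev us)"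
    by (cases us) simp_all
  ultimately have "walk_prod w (us @ x # rev us) = 1"
    by (intro closed_walk_gain) simp_all
  then show ?thesis
    by (simp add: vs walk_prod_append[of w us x "rev us"])
qed

lemma walk_prod_path_independent:
  assumes "successively E us" "successively E vs" "us \<noteq> []" "vs \<noteq> []"
    and "hd us = hd vs" "last us = last vs"
  shows "walk_prod w us = walk_prod w vs"
proof -
  obtain us' x where us: "us = us' @ [x]"
    using assms(3) by (metis rev_exhaust)
  obtain vs' where rev_vs: "rev vs = x # vs'"
    using assms(4,6) by (cases "rev vs") (simp_all add: us last_rev[symmetric])
  have "successively E (us' @ x # vs')"
    using assms(1) successively_rev_walk[OF assms(2)] successively_append_Cons_iff[of E us' x vs']
    by (simp add: us rev_vs)
  moreover have "hd (us' @ x # vs') = last (us' @ x # vs')"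
  proof -
    have "last (us' @ x # vs') = hd vs"
      using arg_cong[OF rev_vs, of last] assms(4) by (simp add: last_rev)
    moreover have "hd (us' @ x # vs') = hd us"
      by (cases us') (simp_all add: us)
    ultimately show ?thesis
      using assms(5) by simp
  qed
  ultimately have "walk_prod w (us' @ x # vs') = 1"
    by (intro closed_walk_gain) simp_all
  then have "walk_prod w us * walk_prod w (rev vs) = 1"
    by (simp add: us rev_vs walk_prod_append[of w us' x vs'])
  moreover have "walk_prod w vs * walk_prod w (rev vs) = 1"
    using assms(2,4) by (rule walk_prod_mult_rev)
  ultimately show ?thesis
    by (metis mult_cancel_right zero_neq_one mult_zero_left)
qed

lemma potential_exists:
  obtains Q where "\<And>x. Q x \<noteq> 0" "\<And>x y. E x y \<Longrightarrow> w x y = Q y / Q x"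
proof -
  have reach_sym: "E\<^sup>*\<^sup>* x y \<Longrightarrow> E\<^sup>*\<^sup>* y x" for x y
    using symp_rtranclp[OF edge_sym] by (blast dest: sympD)
  \<comment> \<open>SOME sees only the set of vertices reachable from x, so it picks one root per component.\<close>
  define root where "root x = (SOME r. E\<^sup>*\<^sup>* x r)" for x
  have root_reach: "E\<^sup>*\<^sup>* (root x) x" for x
    unfolding root_def by (rule reach_sym, rule someI[of _ x]) simp
  have root_cong: "root x = root y" if "E x y" for x y
  proof -
    have "E\<^sup>*\<^sup>* x r \<longleftrightarrow> E\<^sup>*\<^sup>* y r" for r
      using that reach_sym by (meson converse_rtranclp_into_rtranclp r_into_rtranclp rtranclp_trans)
    then show ?thesis
      by (simp add: root_def)
  qed
  define path where
    "path x = (SOME vs. successively E vs \<and> vs \<noteq> [] \<and> hd vs = root x \<and> last vs = x)" for x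
  have path: "successively E (path x) \<and> path x \<noteq> [] \<and> hd (path x) = root x \<and> last (path x) = x"
    for x
    unfolding path_def by (rule someI_ex) (meson rtranclp_imp_walk[OF root_reach])
  define Q where "Q x = walk_prod w (path x)" for x
  have Q_nonzero: "Q x \<noteq> 0" for x
    using walk_prod_mult_rev[of "path x"] path[of x] by (auto simp: Q_def)
  have "w x y = Q y / Q x" if "E x y" for x y
  proof -
    have "successively E (path x @ [y])"
      using path[of x] that by (simp add: successively_append_iff)
    then have "walk_prod w (path x @ [y]) = Q y"
      unfolding Q_def using path[of x] path[of y] root_cong[OF that]
      by (intro walk_prod_path_independent) simp_all
    moreover have "walk_prod w (path x @ [y]) = Q x * w x y"
      using path[of x] by (simp add: Q_def walk_prod_snoc)
    ultimately show ?thesis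
      using Q_nonzero[of x] by (simp add: field_simps)
  qed
  with Q_nonzero that show ?thesis by blast
qed

end

definition diag_matrix :: "('n \<Rightarrow> 'a::zero) \<Rightarrow> 'a^'n^'n" where
  "diag_matrix d = (\<chi> i j. if i = j then d i else 0)"

lemma diag_matrix_mult_left:
  fixes M :: "'a::semiring_1^'m^'n"
  shows "(diag_matrix d ** M) $ i $ j = d i * M $ i $ j"
proof -
  have "(\<Sum>k\<in>UNIV. (if i = k then d i else 0) * M $ k $ j) = d i * M $ i $ j"
    by (simp add: if_distrib[of "\<lambda>x. x * _"] cong: if_cong)
  then show ?thesis
    by (simp add: diag_matrix_def matrix_matrix_mult_def)
qed

lemma diag_matrix_mult_right:
  fixes M :: "'a::semiring_1^'n^'m"
  shows "(M ** diag_matrix d) $ i $ j = M $ i $ j * d j"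
proof -
  have "(\<Sum>k\<in>UNIV. M $ i $ k * (if k = j then d k else 0)) = M $ i $ j * d j"
    by (simp add: if_distrib[of "\<lambda>x. _ * x"] cong: if_cong)
  then show ?thesis
    by (simp add: diag_matrix_def matrix_matrix_mult_def)
qed

lemma diag_matrix_mult: "diag_matrix d ** diag_matrix e = diag_matrix (\<lambda>i. d i * e i)"
  by (simp add: vec_eq_iff diag_matrix_mult_left) (simp add: diag_matrix_def)

lemma diag_matrix_one: "diag_matrix (\<lambda>_. 1) = mat 1"
  by (simp add: diag_matrix_def mat_def)

lemma matrix_inv_unique:
  fixes A :: "'a::semiring_1^'n^'m" and B :: "'a^'m^'n"
  assumes "A ** B = mat 1" "B ** A = mat 1"
  shows "matrix_inv A = B"
proof -
  have "A ** matrix_inv A = mat 1 \<and> matrix_inv A ** A = mat 1"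
    unfolding matrix_inv_def by (rule someI[of _ B]) (simp add: assms)
  then have "matrix_inv A = matrix_inv A ** (A ** B)"
    by (simp add: assms(1))
  also have "\<dots> = B"
    using \<open>_ \<and> _\<close> by (simp add: matrix_mul_assoc)
  finally show ?thesis .
qed

lemma diag_matrix_inverse:
  fixes d :: "'n::finite \<Rightarrow> 'a::field"
  assumes "\<And>i. d i \<noteq> 0"
  shows "invertible (diag_matrix d)" "matrix_inv (diag_matrix d) = diag_matrix (\<lambda>i. inverse (d i))"
proof -
  have "diag_matrix d ** diag_matrix (\<lambda>i. inverse (d i)) = mat 1"
    "diag_matrix (\<lambda>i. inverse (d i)) ** diag_matrix d = mat 1"
    using assms by (simp_all add: diag_matrix_mult diag_matrix_one[symmetric])
  then show "invertible (diag_matrix d)" "matrix_inv (diag_matrix d) = diag_matrix (\<lambda>i. inverse (d i))"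
    by (auto simp: invertible_def intro: matrix_inv_unique)
qed

lemma diagonal_mat_eq_diag_matrix: "diagonal_mat D \<Longrightarrow> D = diag_matrix (\<lambda>i. D $ i $ i)"
  by (auto simp: diagonal_mat_def diag_matrix_def vec_eq_iff)

lemma invertible_diagonal_mat_iff:
  fixes D :: "'a::field^'n^'n"
  assumes "diagonal_mat D"
  shows "invertible D \<longleftrightarrow> (\<forall>i. D $ i $ i \<noteq> 0)"
  using assms by (simp add: invertible_det_nz det_diagonal diagonal_mat_def)

lemma diag_matrix_similarity_nth:
  fixes A :: "'a::field^'n^'n"
  assumes "\<And>i. d i \<noteq> 0"
  shows "(diag_matrix d ** A ** matrix_inv (diag_matrix d)) $ i $ j = d i * A $ i $ j / d j"
  by (simp add: diag_matrix_inverse[OF assms] diag_matrix_mult_left diag_matrix_mult_right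
      divide_inverse)

lemma diagonal_similarity_iff:
  fixes A C :: "'a::field^'n^'n"
  shows "(\<exists>D. diagonal_mat D \<and> invertible D \<and> C = D ** A ** matrix_inv D) \<longleftrightarrow>
    (\<exists>d. (\<forall>i. d i \<noteq> 0) \<and> (\<forall>i j. C $ i $ j = d i * A $ i $ j / d j))"
proof
  assume "\<exists>D. diagonal_mat D \<and> invertible D \<and> C = D ** A ** matrix_inv D"
  then obtain D where D: "diagonal_mat D" "invertible D" "C = D ** A ** matrix_inv D"
    by blast
  then show "\<exists>d. (\<forall>i. d i \<noteq> 0) \<and> (\<forall>i j. C $ i $ j = d i * A $ i $ j / d j)"
    using diag_matrix_similarity_nth[of "\<lambda>i. D $ i $ i" A] diagonal_mat_eq_diag_matrix[OF D(1)]
    by (auto simp: invertible_diagonal_mat_iff)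
next
  assume "\<exists>d. (\<forall>i. d i \<noteq> 0) \<and> (\<forall>i j. C $ i $ j = d i * A $ i $ j / d j)"
  then obtain d where d: "\<And>i. d i \<noteq> 0" "\<And>i j. C $ i $ j = d i * A $ i $ j / d j"
    by blast
  have "diagonal_mat (diag_matrix d)"
    by (simp add: diagonal_mat_def diag_matrix_def)
  moreover have "C = diag_matrix d ** A ** matrix_inv (diag_matrix d)"
    using d diag_matrix_similarity_nth[of d A] by (simp add: vec_eq_iff)
  moreover have "invertible (diag_matrix d)"
    using d(1) by (rule diag_matrix_inverse(1))
  ultimately show "\<exists>D. diagonal_mat D \<and> invertible D \<and> C = D ** A ** matrix_inv D"
    by blast
qed

definition matrix_edge :: "'a::zero^'n^'n \<Rightarrow> 'n \<Rightarrow> 'n \<Rightarrow> bool" where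
  "matrix_edge A i j \<longleftrightarrow> A $ i $ j \<noteq> 0 \<or> A $ j $ i \<noteq> 0"

lemma fentry_nonzero: "matrix_edge A i j \<Longrightarrow> fentry A i j \<noteq> 0"
  by (auto simp: matrix_edge_def fentry_def)

lemma fentry_rescale:
  fixes A C :: "'a::field^'n^'n"
  assumes "\<And>i. d i \<noteq> 0" and "\<And>i j. C $ i $ j = d i * A $ i $ j / d j"
  shows "fentry C i j = d i * fentry A i j / d j"
  using assms(1)[of i] assms(1)[of j] by (simp add: fentry_def assms(2) field_simps)

lemma rescaling_imp_cycle_products:
  fixes A C :: "'a::field^'n^'n"
  assumes "\<And>i. d i \<noteq> 0" and "\<And>i j. C $ i $ j = d i * A $ i $ j / d j"
    and "vs \<noteq> []" "hd vs = last vs"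
  shows "walk_prod (fentry C) vs = walk_prod (fentry A) vs"
proof -
  have "fentry C = (\<lambda>i j. d i * fentry A i j / d j)"
    using fentry_rescale[OF assms(1,2)] by blast
  then show ?thesis
    using walk_prod_rescale[OF assms(1,3)] assms(1,4) by simp
qed

lemma cycle_products_imp_rescaling:
  fixes A C :: "'a::field^'n^'n"
  assumes support: "\<And>i j. A $ i $ j \<noteq> 0 \<longleftrightarrow> C $ i $ j \<noteq> 0"
    and cycles: "\<And>xs. xs \<noteq> [] \<Longrightarrow> distinct xs \<Longrightarrow> successively (matrix_edge A) (xs @ [hd xs]) \<Longrightarrow>
      walk_prod (fentry A) (xs @ [hd xs]) = walk_prod (fentry C) (xs @ [hd xs])"
  obtains d where "\<And>i. d i \<noteq> 0" "\<And>i j. C $ i $ j = d i * A $ i $ j / d j"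
proof -
  define w where "w = (\<lambda>i j. fentry C i j / fentry A i j)"
  interpret balanced_gain_graph "matrix_edge A" w
  proof
    show "symp (matrix_edge A)"
      by (auto simp: symp_def matrix_edge_def)
    fix xs :: "'n list"
    assume "xs \<noteq> []" "distinct xs" and walk: "successively (matrix_edge A) (xs @ [hd xs])"
    have "walk_prod (fentry A) (xs @ [hd xs]) \<noteq> 0"
      using walk fentry_nonzero by (rule walk_prod_nonzero)
    then show "walk_prod w (xs @ [hd xs]) = 1"
      using cycles[OF \<open>xs \<noteq> []\<close> \<open>distinct xs\<close> walk] by (simp add: w_def walk_prod_divide)
  qed
  obtain Q where Q: "\<And>i. Q i \<noteq> 0" "\<And>i j. matrix_edge A i j \<Longrightarrow> w i j = Q j / Q i"
    using potential_exists by blast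
  have "C $ i $ j = inverse (Q i) * A $ i $ j / inverse (Q j)" for i j
  proof (cases "A $ i $ j = 0")
    case True
    then show ?thesis using support by simp
  next
    case False
    then have "C $ i $ j / A $ i $ j = Q j / Q i"
      using Q(2)[of i j] support by (simp add: w_def fentry_def matrix_edge_def)
    then show ?thesis
      using False Q(1)[of i] by (simp add: field_simps)
  qed
  then show ?thesis
    using Q(1) that[of "\<lambda>i. inverse (Q i)"] by simp
qed

lemma rescaling_iff_cycle_products:
  fixes A C :: "'a::field^'n^'n"
  shows "(\<exists>d. (\<forall>i. d i \<noteq> 0) \<and> (\<forall>i j. C $ i $ j = d i * A $ i $ j / d j)) \<longleftrightarrow>
    (\<forall>i j. A $ i $ j \<noteq> 0 \<longleftrightarrow> C $ i $ j \<noteq> 0) \<and>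
    (\<forall>xs. xs \<noteq> [] \<and> distinct xs \<and> successively (matrix_edge A) (xs @ [hd xs]) \<longrightarrow>
       walk_prod (fentry A) (xs @ [hd xs]) = walk_prod (fentry C) (xs @ [hd xs]))"
    (is "?rescaling \<longleftrightarrow> ?support \<and> ?cycles")
proof
  assume ?rescaling
  then obtain d where d: "\<And>i. d i \<noteq> 0" "\<And>i j. C $ i $ j = d i * A $ i $ j / d j"
    by blast
  then have ?support
    by simp
  moreover have ?cycles
  proof (intro allI impI)
    fix xs :: "'n list"
    assume "xs \<noteq> [] \<and> distinct xs \<and> successively (matrix_edge A) (xs @ [hd xs])"
    then show "walk_prod (fentry A) (xs @ [hd xs]) = walk_prod (fentry C) (xs @ [hd xs])"
      using rescaling_imp_cycle_products[OF d, of "xs @ [hd xs]"] by simp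
  qed
  ultimately show "?support \<and> ?cycles" ..
next
  assume "?support \<and> ?cycles"
  then obtain d where "\<And>i. d i \<noteq> 0" "\<And>i j. C $ i $ j = d i * A $ i $ j / d j"
    using cycle_products_imp_rescaling[of A C] by blast
  then show ?rescaling
    by blast
qed

theorem theorem2p9:
  fixes A C :: "'a::field ^'n^'n"
  shows "(\<exists>D. diagonal_mat D \<and> invertible D \<and> C = D ** A ** matrix_inv D) \<longleftrightarrow>
    ((\<forall>i j. A $ i $ j \<noteq> 0 \<longleftrightarrow> C $ i $ j \<noteq> 0) \<and>
     (\<forall>xs :: 'n list. xs \<noteq> [] \<and> distinct xs \<and>
        (\<forall>k < length xs. A $ (xs ! k) $ (xs ! ((k + 1) mod length xs)) \<noteq> 0 \<or>
                          A $ (xs ! ((k + 1) mod length xs)) $ (xs ! k) \<noteq> 0) \<longrightarrow>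
        (\<Prod>k<length xs. fentry A (xs ! k) (xs ! ((k + 1) mod length xs))) =
        (\<Prod>k<length xs. fentry C (xs ! k) (xs ! ((k + 1) mod length xs)))))"
proof -
  have "(xs \<noteq> [] \<and> distinct xs \<and>
        (\<forall>k < length xs. A $ (xs ! k) $ (xs ! ((k + 1) mod length xs)) \<noteq> 0 \<or>
                          A $ (xs ! ((k + 1) mod length xs)) $ (xs ! k) \<noteq> 0) \<longrightarrow>
        (\<Prod>k<length xs. fentry A (xs ! k) (xs ! ((k + 1) mod length xs))) =
        (\<Prod>k<length xs. fentry C (xs ! k) (xs ! ((k + 1) mod length xs)))) \<longleftrightarrow>
      (xs \<noteq> [] \<and> distinct xs \<and> successively (matrix_edge A) (xs @ [hd xs]) \<longrightarrow>
       walk_prod (fentry A) (xs @ [hd xs]) = walk_prod (fentry C) (xs @ [hd xs]))" for xs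
    using cyclic_edges_iff_successively[of xs "matrix_edge A"]
      cyclic_prod_eq_walk_prod[of xs "fentry A"] cyclic_prod_eq_walk_prod[of xs "fentry C"]
    by (cases "xs = []") (simp_all add: matrix_edge_def)
  then show ?thesis
    unfolding diagonal_similarity_iff rescaling_iff_cycle_products by (simp only:)
qed

end
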